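(* Let $t$ be a table with $n$ rows, and fix a predicate such that exactly $pn$ rows of $t$ satisfy it, where $p\in(0,1]$. Draw a sample of $k\ge 1$ rows from $t$ uniformly at random with replacement (i.e., $k$ i.i.d. uniform draws), let $\hat X$ be the number of sampled rows satisfying the predicate, and estimate the cardinality by $\mathrm{est}=\frac{n}{k}\hat X$, the true cardinality being $\mathrm{true}=pn$. Let $\sigma^2=p(1-p)$. Then for every $q\ge 1$, $$\mathbb{P}(\text{Q-error}\le q)\ \ge\ 1-\Omega-\Psi,$$ where $$\Omega=\min\Bigg(\Big(\frac{e^{q-1}}{q^{q}}\Big)^{pk},\ \exp\Big(-\frac{k(pq-p)^2}{2\sigma^2+2(pq-p)/3}\Big)\Bigg),$$ $$\Psi=\min\Bigg(\Big(e^{\frac1q-1}\,q^{\frac1q}\Big)^{pk},\ \exp\Big(-\frac{k(p-p/q)^2}{2\sigma^2+2(p-p/q)/3}\Big)\Bigg).$$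
   Context: The Q-error of an estimate is $\max\big(\frac{\mathrm{true}'}{\mathrm{est}'},\frac{\mathrm{est}'}{\mathrm{true}'}\big)$, where $\mathrm{est}'=\max(\mathrm{est},1)$ and $\mathrm{true}'=\max(\mathrm{true},1)$ (to avoid division by zero). $\Omega$ bounds the probability of over-estimation ($\mathrm{est}\ge q\cdot\mathrm{true}$) and $\Psi$ the probability of under-estimation ($\mathrm{est}\le \mathrm{true}/q$). *)

theory Defs
  imports "HOL-Probability.Probability"
begin

definition qerror :: "real \<Rightarrow> real \<Rightarrow> real" where
  "qerror est tru = max (max tru 1 / max est 1) (max est 1 / max tru 1)"

definition sample_wr :: "nat \<Rightarrow> nat \<Rightarrow> (nat \<Rightarrow> nat) pmf" where
  "sample_wr n k = Pi_pmf {..<k} 0 (\<lambda>_. pmf_of_set {..<n})"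

definition hits :: "(nat \<Rightarrow> 'a) \<Rightarrow> ('a \<Rightarrow> bool) \<Rightarrow> nat \<Rightarrow> (nat \<Rightarrow> nat) \<Rightarrow> nat" where
  "hits t P k s = card {j \<in> {..<k}. P (t (s j))}"

definition Omega_bound :: "real \<Rightarrow> real \<Rightarrow> nat \<Rightarrow> real" where
  "Omega_bound p q k =
     (let \<sigma>2 = p * (1 - p); d = p * q - p in
      min ((exp (q - 1) / q powr q) powr (p * real k))
          (exp (- (real k * d\<^sup>2) / (2 * \<sigma>2 + 2 * d / 3))))"

definition Psi_bound :: "real \<Rightarrow> real \<Rightarrow> nat \<Rightarrow> real" where
  "Psi_bound p q k =
     (let \<sigma>2 = p * (1 - p); d = p - p / q in
      min ((exp (1 / q - 1) * q powr (1 / q)) powr (p * real k))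
          (exp (- (real k * d\<^sup>2) / (2 * \<sigma>2 + 2 * d / 3))))"

end

theory Submission
  imports Defs
begin

text \<open>The number of hits is a sum of \<open>k\<close> independent Bernoulli(\<open>p\<close>) indicators, so
  \<open>E exp (l * hits) = (1 - p + p e\<^sup>l)\<^sup>k\<close>, and the exponential Markov (Chernoff) inequality
  bounds both tails \<open>hits \<ge> q p k\<close> and \<open>hits \<le> p k / q\<close>. Bounding the Bernoulli moment
  generating function by \<open>exp (p (e\<^sup>l - 1))\<close> and choosing \<open>l = ln q\<close> gives the first terms of
  \<open>\<Omega>\<close> and \<open>\<Psi>\<close>. Bounding it instead by Bennett's \<open>e\<^sup>l\<^sup>z \<le> 1 + l z + z\<^sup>2 (e\<^sup>l - 1 - l)\<close>
  for \<open>|z| \<le> 1\<close>, together with \<open>e\<^sup>l - 1 - l \<le> l\<^sup>2 / (2 (1 - l/3))\<close>, gives Bernstein's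
  exponents. Outside both tails the estimate is within a factor \<open>q\<close> of the true count
  \<open>p n \<ge> 1\<close>, so the union bound completes the argument.\<close>

lemma sums_exp_minus_one_minus_self:
  fixes x :: real
  shows "(\<lambda>i. x ^ (i + 2) / fact (i + 2)) sums (exp x - 1 - x)"
proof -
  have "(\<lambda>i. x ^ i / fact i) sums exp x"
    using exp_converges[of x] by (simp add: divide_inverse mult.commute)
  then have "(\<lambda>i. x ^ (i + 2) / fact (i + 2)) sums (exp x - (\<Sum>i<2. x ^ i / fact i))"
    by (subst sums_iff_shift) simp
  then show ?thesis
    by (simp add: numeral_2_eq_2 diff_diff_eq)
qed

lemma two_mult_three_power_le_fact: "2 * 3 ^ i \<le> (fact (i + 2) :: real)"
proof (induction i)
  case 0
  then show ?case by simp
next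
  case (Suc i)
  have "2 * 3 ^ Suc i = 3 * (2 * (3::real) ^ i)"
    by simp
  also have "\<dots> \<le> real (i + 3) * fact (i + 2)"
    using Suc.IH by (intro mult_mono) auto
  also have "\<dots> = fact (Suc i + 2)"
    by (simp add: algebra_simps numeral_3_eq_3)
  finally show ?case .
qed

lemma exp_mult_le_quadratic:
  fixes l z :: real
  assumes "l \<ge> 0" "\<bar>z\<bar> \<le> 1"
  shows "exp (l * z) \<le> 1 + l * z + z\<^sup>2 * (exp l - 1 - l)"
proof -
  have "(l * z) ^ (i + 2) / fact (i + 2) \<le> z\<^sup>2 * (l ^ (i + 2) / fact (i + 2))" for i
  proof -
    have "(l * z) ^ (i + 2) \<le> \<bar>l * z\<bar> ^ (i + 2)"
      by (metis abs_ge_self power_abs)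
    also have "\<dots> = \<bar>z\<bar> ^ i * z\<^sup>2 * l ^ (i + 2)"
      using assms by (simp add: abs_mult power_mult_distrib power_add power2_eq_square)
    also have "\<dots> \<le> 1 * z\<^sup>2 * l ^ (i + 2)"
      using assms by (intro mult_right_mono power_le_one) auto
    finally show ?thesis
      by (simp add: divide_right_mono)
  qed
  then have "exp (l * z) - 1 - l * z \<le> z\<^sup>2 * (exp l - 1 - l)"
    by (intro sums_le[OF _ sums_exp_minus_one_minus_self sums_mult[OF sums_exp_minus_one_minus_self]])
  then show ?thesis
    by simp
qed

lemma exp_minus_one_minus_self_le:
  fixes l :: real
  assumes "0 \<le> l" "l < 3"
  shows "exp l - 1 - l \<le> l\<^sup>2 / (2 * (1 - l / 3))"
proof -
  have "l ^ (i + 2) / fact (i + 2) \<le> l\<^sup>2 / 2 * (l / 3) ^ i" for i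
  proof -
    have "l ^ (i + 2) / fact (i + 2) \<le> l ^ (i + 2) / (2 * 3 ^ i)"
      using assms two_mult_three_power_le_fact[of i] by (intro divide_left_mono) auto
    then show ?thesis
      by (simp add: power_add power_divide power2_eq_square)
  qed
  moreover have "(\<lambda>i. l\<^sup>2 / 2 * (l / 3) ^ i) sums (l\<^sup>2 / 2 * (1 / (1 - l / 3)))"
    using assms by (intro sums_mult geometric_sums) auto
  ultimately have "exp l - 1 - l \<le> l\<^sup>2 / 2 * (1 / (1 - l / 3))"
    by (intro sums_le[OF _ sums_exp_minus_one_minus_self])
  then show ?thesis
    by simp
qed

lemma bernoulli_mgf_le_Bennett:
  fixes p l :: real
  assumes "0 \<le> p" "p \<le> 1" "l \<ge> 0"
  shows "1 - p + p * exp l \<le> exp (l * p + p * (1 - p) * (exp l - 1 - l))"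
proof -
  have "1 - p + p * exp l = exp (l * p) * ((1 - p) * exp (l * (- p)) + p * exp (l * (1 - p)))"
    by (simp add: algebra_simps flip: exp_add)
  also have "\<dots> \<le> exp (l * p) * ((1 - p) * (1 + l * (- p) + (- p)\<^sup>2 * (exp l - 1 - l))
                                   + p * (1 + l * (1 - p) + (1 - p)\<^sup>2 * (exp l - 1 - l)))"
    using assms by (intro mult_left_mono add_mono exp_mult_le_quadratic) auto
  also have "\<dots> = exp (l * p) * (1 + p * (1 - p) * (exp l - 1 - l))"
    by (simp add: algebra_simps power2_eq_square)
  also have "\<dots> \<le> exp (l * p) * exp (p * (1 - p) * (exp l - 1 - l))"
    by (intro mult_left_mono exp_ge_add_one_self) simp
  finally show ?thesis
    by (simp add: exp_add)
qed

lemma bernoulli_mgf_neg_le_Bennett: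
  fixes p l :: real
  assumes "0 \<le> p" "p \<le> 1" "l \<ge> 0"
  shows "1 - p + p * exp (- l) \<le> exp (- l * p + p * (1 - p) * (exp l - 1 - l))"
proof -
  \<comment> \<open>exchange the roles of \<open>p\<close> and \<open>1 - p\<close>\<close>
  have "1 - p + p * exp (- l) = exp (- l) * (1 - (1 - p) + (1 - p) * exp l)"
    by (simp add: algebra_simps flip: exp_add)
  also have "\<dots> \<le> exp (- l) * exp (l * (1 - p) + (1 - p) * (1 - (1 - p)) * (exp l - 1 - l))"
    using assms by (intro mult_left_mono bernoulli_mgf_le_Bennett) auto
  also have "\<dots> = exp (- l * p + p * (1 - p) * (exp l - 1 - l))"
    by (simp add: algebra_simps flip: exp_add)
  finally show ?thesis .
qed

lemma Bennett_exponent_le_Bernstein: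
  fixes w d :: real
  assumes "w \<ge> 0" "d > 0"
  obtains l where "l > 0" "w * (exp l - 1 - l) - l * d \<le> - (d\<^sup>2 / (2 * w + 2 * d / 3))"
proof (cases "w = 0")
  case True
  with assms show ?thesis
    by (intro that[of 3]) (auto simp: power2_eq_square)
next
  case False
  define e where "e = w + d / 3"
  define l where "l = d / e"
  have w: "w > 0" and e: "e > 0"
    using False assms unfolding e_def by auto
  have l: "0 < l" "l < 3"
    using w assms unfolding l_def e_def by (auto simp: divide_less_eq)
  have "1 - l / 3 = w / e"
    using e unfolding l_def e_def by (simp add: field_simps)
  have "w * (exp l - 1 - l) \<le> w * (l\<^sup>2 / (2 * (1 - l / 3)))"
    using exp_minus_one_minus_self_le l w by (intro mult_left_mono) auto
  also have "\<dots> = l * (l * e) / 2"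
    unfolding \<open>1 - l / 3 = w / e\<close> using w e by (simp add: field_simps power2_eq_square)
  also have "\<dots> = l * d - d\<^sup>2 / (2 * e)"
    using e unfolding l_def by (simp add: field_simps power2_eq_square)
  finally show ?thesis
    using l by (intro that[of l]) (auto simp: e_def)
qed

lemma qerror_le:
  assumes "tru \<ge> 1" "q \<ge> 1" "est \<le> q * tru" "tru \<le> q * est"
  shows "qerror est tru \<le> q"
proof -
  have "1 \<le> q * tru"
    using mult_mono[of 1 q 1 tru] assms by simp
  then have "max est 1 / tru \<le> q"
    using assms by (simp add: divide_le_eq mult.commute)
  moreover have "tru / max est 1 \<le> q"
  proof -
    have "q * est \<le> q * max est 1"
      using assms by (intro mult_left_mono) auto
    with assms have "tru \<le> q * max est 1"
      by linarith
    then show ?thesis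
      by (simp add: pos_divide_le_eq mult.commute)
  qed
  ultimately show ?thesis
    using assms by (simp add: qerror_def max_absorb1)
qed

lemma measure_pmf_prob_ge_union_bound:
  assumes "\<And>x. x \<notin> A \<Longrightarrow> x \<notin> B \<Longrightarrow> x \<in> G"
  shows "measure_pmf.prob M G \<ge> 1 - measure_pmf.prob M A - measure_pmf.prob M B"
proof -
  have "1 = measure_pmf.prob M (G \<union> A \<union> B)"
    using assms by (metis UNIV_eq_I Un_iff measure_pmf.prob_space space_measure_pmf)
  also have "\<dots> \<le> measure_pmf.prob M (G \<union> A) + measure_pmf.prob M B"
    by (rule measure_Un_le) auto
  also have "\<dots> \<le> measure_pmf.prob M G + measure_pmf.prob M A + measure_pmf.prob M B"
    using measure_Un_le[of G M A] by simp
  finally show ?thesis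
    by simp
qed

lemma real_hits_eq_sum: "real (hits t P k s) = (\<Sum>j<k. of_bool (P (t (s j))))"
  unfolding hits_def by (simp add: of_bool_def sum.If_cases Int_def lessThan_def)

context
  fixes t :: "nat \<Rightarrow> 'a" and P :: "'a \<Rightarrow> bool" and n :: nat and p :: real
  assumes n_pos: "n > 0"
    and card_sat: "real (card {i \<in> {..<n}. P (t i)}) = p * real n"
begin

lemma sat_fraction_bounds: "0 \<le> p" "p \<le> 1"
proof -
  have "card {i \<in> {..<n}. P (t i)} \<le> n"
    by (metis (no_types, lifting) card_lessThan card_mono finite_lessThan mem_Collect_eq subsetI)
  moreover have "p = real (card {i \<in> {..<n}. P (t i)}) / real n"
    using card_sat n_pos by simp
  ultimately show "0 \<le> p" "p \<le> 1"
    using n_pos by (simp_all add: divide_le_eq_1)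
qed

lemma expectation_exp_single_draw:
  "measure_pmf.expectation (pmf_of_set {..<n}) (\<lambda>v. exp (l * of_bool (P (t v))))
     = 1 - p + p * exp l"
proof -
  have "(\<Sum>v<n. exp (l * of_bool (P (t v)))) = (\<Sum>v<n. 1 + (exp l - 1) * of_bool (P (t v)))"
    by (intro sum.cong) auto
  also have "\<dots> = n + (exp l - 1) * card {i \<in> {..<n}. P (t i)}"
    by (simp add: sum.distrib flip: sum_distrib_left) (simp add: of_bool_def sum.If_cases Int_def lessThan_def)
  also have "\<dots> = n * (1 - p + p * exp l)"
    using card_sat by (simp add: algebra_simps)
  finally show ?thesis
    using n_pos by (subst integral_pmf_of_set) auto
qed

lemma expectation_exp_hits:
  "measure_pmf.expectation (sample_wr n k) (\<lambda>s. exp (l * real (hits t P k s)))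
     = (1 - p + p * exp l) ^ k"
proof -
  have "measure_pmf.expectation (sample_wr n k) (\<lambda>s. exp (l * real (hits t P k s)))
      = measure_pmf.expectation (sample_wr n k) (\<lambda>s. \<Prod>j<k. exp (l * of_bool (P (t (s j)))))"
    by (simp only: real_hits_eq_sum sum_distrib_left exp_sum finite_lessThan)
  also have "\<dots> = (\<Prod>j<k. measure_pmf.expectation (pmf_of_set {..<n}) (\<lambda>v. exp (l * of_bool (P (t v)))))"
    unfolding sample_wr_def using n_pos
    by (intro expectation_prod_Pi_pmf)
       (auto simp: set_pmf_of_set lessThan_empty_iff intro!: integrable_measure_pmf_finite)
  finally show ?thesis
    by (simp add: expectation_exp_single_draw)
qed

lemma finite_set_pmf_sample_wr: "finite (set_pmf (sample_wr n k))"
  unfolding sample_wr_def using n_pos by (auto simp: set_Pi_pmf set_pmf_of_set lessThan_empty_iff)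

lemma prob_hits_ge_Chernoff:
  assumes "l > 0" and mgf: "1 - p + p * exp l \<le> exp c"
  shows "measure_pmf.prob (sample_wr n k) {s. a \<le> real (hits t P k s)} \<le> exp (k * c - l * a)"
proof -
  have "measure_pmf.prob (sample_wr n k) {s \<in> UNIV. a \<le> real (hits t P k s)}
      \<le> exp (- l * a) * (\<integral>s\<in>UNIV. exp (l * real (hits t P k s)) \<partial>sample_wr n k)"
    using \<open>l > 0\<close> finite_set_pmf_sample_wr
    by (intro measure_pmf.Chernoff_ineq_ge) (auto simp: set_integrable_def intro: integrable_measure_pmf_finite)
  also have "\<dots> = exp (- l * a) * (1 - p + p * exp l) ^ k"
    using expectation_exp_hits[where l = l] by (simp add: set_lebesgue_integral_def)
  also have "\<dots> \<le> exp (- l * a) * exp c ^ k"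
    using mgf sat_fraction_bounds by (intro mult_left_mono power_mono) auto
  also have "\<dots> = exp (k * c - l * a)"
    by (simp add: exp_diff exp_minus divide_inverse flip: exp_of_nat_mult)
  finally show ?thesis
    by simp
qed

lemma prob_hits_le_Chernoff:
  assumes "l > 0" and mgf: "1 - p + p * exp (- l) \<le> exp c"
  shows "measure_pmf.prob (sample_wr n k) {s. real (hits t P k s) \<le> a} \<le> exp (k * c + l * a)"
proof -
  have "measure_pmf.prob (sample_wr n k) {s \<in> UNIV. real (hits t P k s) \<le> a}
      \<le> exp (l * a) * (\<integral>s\<in>UNIV. exp (- l * real (hits t P k s)) \<partial>sample_wr n k)"
    using \<open>l > 0\<close> finite_set_pmf_sample_wr
    by (intro measure_pmf.Chernoff_ineq_le) (auto simp: set_integrable_def intro: integrable_measure_pmf_finite)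
  also have "\<dots> = exp (l * a) * (1 - p + p * exp (- l)) ^ k"
    using expectation_exp_hits[where l = "- l"] by (simp add: set_lebesgue_integral_def)
  also have "\<dots> \<le> exp (l * a) * exp c ^ k"
    using mgf sat_fraction_bounds by (intro mult_left_mono power_mono) auto
  also have "\<dots> = exp (k * c + l * a)"
    by (simp add: exp_add flip: exp_of_nat_mult)
  finally show ?thesis
    by simp
qed

lemma prob_hits_ge_multiplicative:
  assumes "q > 1"
  shows "measure_pmf.prob (sample_wr n k) {s. q * p * k \<le> real (hits t P k s)}
           \<le> (exp (q - 1) / q powr q) powr (p * real k)"
proof -
  have "1 - p + p * exp (ln q) \<le> exp (p * (q - 1))"
    using exp_ge_add_one_self[of "p * (q - 1)"] assms by (simp add: algebra_simps)
  then have "measure_pmf.prob (sample_wr n k) {s. q * p * k \<le> real (hits t P k s)}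
      \<le> exp (k * (p * (q - 1)) - ln q * (q * p * k))"
    using assms by (intro prob_hits_ge_Chernoff) auto
  also have "\<dots> = (exp (q - 1) / q powr q) powr (p * real k)"
    using assms by (simp add: powr_def ln_div ln_powr algebra_simps)
  finally show ?thesis .
qed

lemma prob_hits_le_multiplicative:
  assumes "q > 1"
  shows "measure_pmf.prob (sample_wr n k) {s. real (hits t P k s) \<le> p * k / q}
           \<le> (exp (1 / q - 1) * q powr (1 / q)) powr (p * real k)"
proof -
  have "1 - p + p * exp (- ln q) \<le> exp (p * (1 / q - 1))"
    using exp_ge_add_one_self[of "p * (1 / q - 1)"] assms
    by (simp add: exp_minus inverse_eq_divide algebra_simps)
  then have "measure_pmf.prob (sample_wr n k) {s. real (hits t P k s) \<le> p * k / q}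
      \<le> exp (k * (p * (1 / q - 1)) + ln q * (p * k / q))"
    using assms by (intro prob_hits_le_Chernoff) auto
  also have "\<dots> = (exp (1 / q - 1) * q powr (1 / q)) powr (p * real k)"
    using assms by (simp add: powr_def ln_mult ln_powr algebra_simps)
  finally show ?thesis .
qed

lemma prob_hits_ge_Bernstein:
  assumes "d > 0"
  shows "measure_pmf.prob (sample_wr n k) {s. real k * (p + d) \<le> real (hits t P k s)}
           \<le> exp (- (real k * d\<^sup>2) / (2 * (p * (1 - p)) + 2 * d / 3))"
proof -
  obtain l where "l > 0"
    and l: "p * (1 - p) * (exp l - 1 - l) - l * d \<le> - (d\<^sup>2 / (2 * (p * (1 - p)) + 2 * d / 3))"
    using Bennett_exponent_le_Bernstein[of "p * (1 - p)" d] sat_fraction_bounds assms by auto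
  have "measure_pmf.prob (sample_wr n k) {s. real k * (p + d) \<le> real (hits t P k s)}
      \<le> exp (k * (l * p + p * (1 - p) * (exp l - 1 - l)) - l * (k * (p + d)))"
    using sat_fraction_bounds \<open>l > 0\<close> by (intro prob_hits_ge_Chernoff bernoulli_mgf_le_Bennett) auto
  also have "\<dots> = exp (k * (p * (1 - p) * (exp l - 1 - l) - l * d))"
    by (simp add: algebra_simps)
  also have "\<dots> \<le> exp (- (real k * d\<^sup>2) / (2 * (p * (1 - p)) + 2 * d / 3))"
    using mult_left_mono[OF l, of "real k"] by simp
  finally show ?thesis .
qed

lemma prob_hits_le_Bernstein:
  assumes "d > 0"
  shows "measure_pmf.prob (sample_wr n k) {s. real (hits t P k s) \<le> real k * (p - d)}
           \<le> exp (- (real k * d\<^sup>2) / (2 * (p * (1 - p)) + 2 * d / 3))"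
proof -
  obtain l where "l > 0"
    and l: "p * (1 - p) * (exp l - 1 - l) - l * d \<le> - (d\<^sup>2 / (2 * (p * (1 - p)) + 2 * d / 3))"
    using Bennett_exponent_le_Bernstein[of "p * (1 - p)" d] sat_fraction_bounds assms by auto
  have "measure_pmf.prob (sample_wr n k) {s. real (hits t P k s) \<le> real k * (p - d)}
      \<le> exp (k * (- l * p + p * (1 - p) * (exp l - 1 - l)) + l * (k * (p - d)))"
    using sat_fraction_bounds \<open>l > 0\<close> by (intro prob_hits_le_Chernoff bernoulli_mgf_neg_le_Bennett) auto
  also have "\<dots> = exp (k * (p * (1 - p) * (exp l - 1 - l) - l * d))"
    by (simp add: algebra_simps)
  also have "\<dots> \<le> exp (- (real k * d\<^sup>2) / (2 * (p * (1 - p)) + 2 * d / 3))"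
    using mult_left_mono[OF l, of "real k"] by simp
  finally show ?thesis .
qed

lemma qerror_estimate_le:
  assumes "k > 0" "q \<ge> 1" "p > 0" "p * k / q \<le> x" "x \<le> q * p * k"
  shows "qerror (real n / real k * x) (p * real n) \<le> q"
proof (rule qerror_le)
  have "0 < real (card {i \<in> {..<n}. P (t i)})"
    using card_sat n_pos \<open>p > 0\<close> by simp
  then have "1 \<le> real (card {i \<in> {..<n}. P (t i)})"
    by (simp add: Suc_le_eq)
  then show "p * real n \<ge> 1"
    using card_sat by linarith
  have "real n / real k * x \<le> real n / real k * (q * p * k)"
    using assms by (intro mult_left_mono) auto
  also have "\<dots> = q * (p * real n)"
    using assms by simp
  finally show "real n / real k * x \<le> q * (p * real n)" .
  have "real n / real k * (p * k / q) \<le> real n / real k * x"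
    using assms by (intro mult_left_mono) auto
  then show "p * real n \<le> q * (real n / real k * x)"
    using assms by (simp add: field_simps)
qed (use assms in simp)

lemma prob_hits_ge_le_Omega_bound:
  assumes "p > 0" "q > 1"
  shows "measure_pmf.prob (sample_wr n k) {s. q * p * k \<le> real (hits t P k s)} \<le> Omega_bound p q k"
proof -
  have "measure_pmf.prob (sample_wr n k) {s. q * p * k \<le> real (hits t P k s)}
      = measure_pmf.prob (sample_wr n k) {s. real k * (p + (p * q - p)) \<le> real (hits t P k s)}"
    by (simp add: algebra_simps)
  also have "\<dots> \<le> exp (- (real k * (p * q - p)\<^sup>2) / (2 * (p * (1 - p)) + 2 * (p * q - p) / 3))"
    using assms by (intro prob_hits_ge_Bernstein) auto
  finally show ?thesis
    using prob_hits_ge_multiplicative[OF \<open>q > 1\<close>] unfolding Omega_bound_def Let_def by simp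
qed

lemma prob_hits_le_le_Psi_bound:
  assumes "p > 0" "q > 1"
  shows "measure_pmf.prob (sample_wr n k) {s. real (hits t P k s) \<le> p * k / q} \<le> Psi_bound p q k"
proof -
  have "measure_pmf.prob (sample_wr n k) {s. real (hits t P k s) \<le> p * k / q}
      = measure_pmf.prob (sample_wr n k) {s. real (hits t P k s) \<le> real k * (p - (p - p / q))}"
    by (simp add: algebra_simps)
  also have "\<dots> \<le> exp (- (real k * (p - p / q)\<^sup>2) / (2 * (p * (1 - p)) + 2 * (p - p / q) / 3))"
    using assms by (intro prob_hits_le_Bernstein) (auto simp: field_simps)
  finally show ?thesis
    using prob_hits_le_multiplicative[OF \<open>q > 1\<close>] unfolding Psi_bound_def Let_def by simp
qed

end

theorem theorem1:
  fixes t :: "nat \<Rightarrow> 'a" and P :: "'a \<Rightarrow> bool" and n k :: nat and p q :: real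
  assumes "n > 0"
    and "0 < p" and "p \<le> 1"
    and "real (card {i \<in> {..<n}. P (t i)}) = p * real n"
    and "k \<ge> 1"
    and "q \<ge> 1"
  shows "measure_pmf.prob (sample_wr n k)
           {s. qerror (real n / real k * real (hits t P k s)) (p * real n) \<le> q}
         \<ge> 1 - Omega_bound p q k - Psi_bound p q k"
proof (cases "q = 1")
  case True
  then have "Omega_bound p q k = 1" "Psi_bound p q k = 1"
    unfolding Omega_bound_def Psi_bound_def by simp_all
  then show ?thesis
    by (smt (verit) measure_nonneg)
next
  case False
  with assms have "q > 1" "k > 0"
    by auto
  have accurate: "qerror (real n / real k * x) (p * real n) \<le> q"
    if "\<not> q * p * k \<le> x" "\<not> x \<le> p * k / q" for x
    by (rule qerror_estimate_le[where t = t and P = P]) (use assms \<open>k > 0\<close> that in auto)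
  have "measure_pmf.prob (sample_wr n k)
          {s. qerror (real n / real k * real (hits t P k s)) (p * real n) \<le> q}
        \<ge> 1 - measure_pmf.prob (sample_wr n k) {s. q * p * k \<le> real (hits t P k s)}
            - measure_pmf.prob (sample_wr n k) {s. real (hits t P k s) \<le> p * k / q}"
    by (intro measure_pmf_prob_ge_union_bound) (blast intro: accurate)
  with prob_hits_ge_le_Omega_bound[where t = t and P = P and k = k, OF assms(1,4,2) \<open>q > 1\<close>]
    prob_hits_le_le_Psi_bound[where t = t and P = P and k = k, OF assms(1,4,2) \<open>q > 1\<close>]
  show ?thesis
    by linarith
qed

end
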